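(* Let $a>b\geq1$ be coprime integers, $p=a/b$, $\hat n\geq 1$ an integer, $N=(2^b+2)\hat n+2^{a-b}+2^b$. Define $g_0=\mathbf{1}_{(2^b+1)\hat n}\circ\mathbf{0}_{\hat n}\circ\mathbf{0}_{2^{a-b}}\circ\mathbf{1}_{2^b}$ and, for $i\in[2^{a-b}]$, $g_i=\mathbf{0}_{(2^b+2)\hat n}\circ\mathbf{0}_{i-1}\circ 1\circ\mathbf{0}_{2^{a-b}+2^b-i}$, all of length $N$. Then for every $s^*\in\{0,1\}^N$, $\sum_{i=0}^{2^{a-b}} d(s^*,g_i)^p\geq(2^a+2^{a-b})(\hat n+1)^p$.
   Context: $d$ denotes Hamming distance; $\mathbf{0}_\ell,\mathbf{1}_\ell$ are the all-zero/all-one strings of length $\ell$; $\circ$ is concatenation; $[t]=\{1,\dots,t\}$. *)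

theory Defs
  imports Complex_Main
begin

text \<open>Binary strings are lists of booleans (True = 1, False = 0).\<close>

definition hamming :: "bool list \<Rightarrow> bool list \<Rightarrow> nat" where
  "hamming x y = card {i. i < length x \<and> x ! i \<noteq> y ! i}"

abbreviation zeros :: "nat \<Rightarrow> bool list" where "zeros l \<equiv> replicate l False"
abbreviation ones :: "nat \<Rightarrow> bool list" where "ones l \<equiv> replicate l True"

end

theory Submission imports Defs "HOL-Analysis.Analysis" begin

text \<open>The \<open>i\<close>-th point \<open>g\<^sub>i\<close> differs from \<open>g\<^sub>0\<close> in \<open>(2^b+1)(n+1)\<close> positions, so by the triangle
  inequality \<open>d(s,g\<^sub>0) + d(s,g\<^sub>i) \<ge> (2^b+1)(n+1)\<close> for every \<open>i \<ge> 1\<close>. With \<open>q = n+1\<close> and \<open>p = a/b\<close>,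
  compare \<open>x\<^sup>p\<close> with its tangent at \<open>2^b q\<close> for \<open>g\<^sub>0\<close> and at \<open>q\<close> for the other \<open>2^(a-b)\<close> points;
  since \<open>(2^b)^(p-1) = 2^(a-b)\<close>, the slope at \<open>2^b q\<close> is exactly \<open>2^(a-b)\<close> times the slope at \<open>q\<close>,
  so the linear terms add up to a nonnegative multiple of the pairwise bounds.\<close>

lemma hamming_eq_sum_list:
  "length x = length y \<Longrightarrow>
    hamming x y = sum_list (map (\<lambda>(u, v). if u = v then 0 else 1) (zip x y))"
proof -
  assume "length x = length y"
  have "hamming x y = card {i\<in>{0..<length x}. x ! i \<noteq> y ! i}"
    unfolding hamming_def by (simp add: Int_def)
  also have "\<dots> = (\<Sum>i\<in>{0..<length x}. if x ! i \<noteq> y ! i then 1 else 0)"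
    by (simp add: sum.If_cases Int_def)
  also have "\<dots> = sum_list (map (\<lambda>(u, v). if u = v then 0 else 1) (zip x y))"
    using \<open>length x = length y\<close> by (auto simp add: sum_list_sum_nth intro!: sum.cong)
  finally show ?thesis .
qed

lemma hamming_append:
  "length x = length y \<Longrightarrow> length u = length v \<Longrightarrow>
    hamming (x @ u) (y @ v) = hamming x y + hamming u v"
  by (simp add: hamming_eq_sum_list)

lemma hamming_replicate:
  "hamming (replicate k u) (replicate k v) = (if u = v then 0 else k)"
  by (simp add: hamming_eq_sum_list zip_replicate sum_list_replicate)

lemma hamming_commute: "length x = length y \<Longrightarrow> hamming x y = hamming y x"
  unfolding hamming_def by metis

lemma hamming_triangle:
  assumes "length x = length y" "length y = length z"
  shows "hamming x z \<le> hamming x y + hamming y z"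
proof -
  have "hamming x z \<le> card ({i. i < length x \<and> x ! i \<noteq> y ! i} \<union> {i. i < length y \<and> y ! i \<noteq> z ! i})"
    unfolding hamming_def using assms by (intro card_mono) auto
  also have "\<dots> \<le> hamming x y + hamming y z"
    unfolding hamming_def by (rule card_Un_le)
  finally show ?thesis .
qed

lemma hamming_triangle_through:
  "length s = length x \<Longrightarrow> length s = length y \<Longrightarrow> hamming x y \<le> hamming s x + hamming s y"
  using hamming_triangle[of x s y] hamming_commute[of s x] by simp

lemma hamming_block_vs_unit_vector:
  assumes "1 \<le> i" "i \<le> m"
  shows "hamming (ones ((B + 1) * n) @ zeros n @ zeros m @ ones B)
                 (zeros ((B + 2) * n) @ zeros (i - 1) @ [True] @ zeros (m + B - i))
         = (B + 1) * n + B + 1"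
proof -
  have "zeros ((B + 2) * n) @ zeros (i - 1) @ [True] @ zeros (m + B - i)
      = zeros ((B + 1) * n) @ zeros n @ (zeros (i - 1) @ [True] @ zeros (m - i)) @ zeros B"
    using assms by (simp add: algebra_simps flip: replicate_add)
  moreover have "zeros m = zeros (i - 1) @ [False] @ zeros (m - i)"
    using assms by (simp flip: replicate_add replicate_Suc)
  ultimately show ?thesis
    by (simp add: hamming_eq_sum_list sum_list_replicate)
qed

lemma powr_ge_tangent:
  fixes x c p :: real
  assumes "x \<ge> 0" "c > 0" "p \<ge> 1"
  shows "c powr p + p * c powr (p - 1) * (x - c) \<le> x powr p"
proof (cases "x = 0")
  case True
  have "c powr p = c * c powr (p - 1)"
    using assms by (simp add: powr_mult_base)
  then show ?thesis
    using True assms by (simp add: algebra_simps)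
next
  case False
  with assms have "x > 0" by simp
  have "p * c powr (p - 1) * (x - c) \<le> x powr p - c powr p"
  proof (rule convex_on_imp_above_tangent[OF powr_convex[OF assms(3)]])
    show "((\<lambda>x. x powr p) has_field_derivative p * c powr (p - 1)) (at c within {0<..})"
      using assms by (auto intro!: derivative_eq_intros)
  qed (use assms \<open>x > 0\<close> in \<open>auto simp: interior_open\<close>)
  then show ?thesis by simp
qed

lemma sum_powr_ge_of_pair_bounds:
  fixes d :: "nat \<Rightarrow> real" and B q p :: real
  assumes nonneg: "\<And>i. i \<le> m \<Longrightarrow> d i \<ge> 0"
    and pair: "\<And>i. 1 \<le> i \<Longrightarrow> i \<le> m \<Longrightarrow> d 0 + d i \<ge> (B + 1) * q"
    and "B > 0" "q > 0" "p \<ge> 1" and weight: "B powr (p - 1) = m"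
  shows "(\<Sum>i\<in>{0..m}. d i powr p) \<ge> (B + 1) * m * q powr p"
proof -
  let ?s = "p * q powr (p - 1)"
  have Bq_p: "(B * q) powr p = B * m * q powr p"
    using assms by (simp add: powr_mult powr_mult_base flip: weight)
  have Bq_p1: "(B * q) powr (p - 1) = m * q powr (p - 1)"
    using assms by (simp add: powr_mult)
  have top: "d 0 powr p \<ge> B * m * q powr p + ?s * (m * d 0 - m * B * q)"
    using powr_ge_tangent[OF nonneg[of 0] _ \<open>p \<ge> 1\<close>, of "B * q"] assms Bq_p Bq_p1
    by (simp add: algebra_simps)
  have "(\<Sum>i\<in>{1..m}. d i powr p) \<ge> (\<Sum>i\<in>{1..m}. q powr p + ?s * (d i - q))"
    using powr_ge_tangent[OF nonneg \<open>q > 0\<close> \<open>p \<ge> 1\<close>] by (intro sum_mono) auto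
  also have "(\<Sum>i\<in>{1..m}. q powr p + ?s * (d i - q))
      = m * q powr p + ?s * ((\<Sum>i\<in>{1..m}. d i) - m * q)"
    by (simp add: sum.distrib sum_distrib_left sum_subtractf algebra_simps)
  finally have rest: "(\<Sum>i\<in>{1..m}. d i powr p) \<ge> m * q powr p + ?s * ((\<Sum>i\<in>{1..m}. d i) - m * q)" .
  have "(\<Sum>i\<in>{1..m}. (B + 1) * q) \<le> (\<Sum>i\<in>{1..m}. d 0 + d i)"
    by (intro sum_mono pair) auto
  then have "0 \<le> ?s * (m * d 0 + (\<Sum>i\<in>{1..m}. d i) - m * (B + 1) * q)"
    using assms by (intro mult_nonneg_nonneg) (auto simp: sum.distrib)
  then show ?thesis
    using top rest by (simp add: sum.atLeast_Suc_atMost algebra_simps)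
qed

theorem claim2:
  fixes a b nh :: nat and s :: "bool list"
  assumes "b \<ge> 1" and "a > b" and "coprime a b" and "nh \<ge> 1"
    and "length s = (2^b + 2) * nh + 2^(a-b) + 2^b"
  shows "(\<Sum>i\<in>{0..2^(a-b)}.
            real (hamming s
              (if i = 0
               then ones ((2^b + 1) * nh) @ zeros nh @ zeros (2^(a-b)) @ ones (2^b)
               else zeros ((2^b + 2) * nh) @ zeros (i - 1) @ [True] @ zeros (2^(a-b) + 2^b - i)))
            powr (real a / real b))
         \<ge> (2^a + 2^(a-b)) * (real nh + 1) powr (real a / real b)"
proof -
  define g :: "nat \<Rightarrow> bool list" where "g i =
    (if i = 0
     then ones ((2^b + 1) * nh) @ zeros nh @ zeros (2^(a-b)) @ ones (2^b)
     else zeros ((2^b + 2) * nh) @ zeros (i - 1) @ [True] @ zeros (2^(a-b) + 2^b - i))" for i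
  have length_g: "length s = length (g i)" if "i \<le> 2^(a-b)" for i
    using that assms(5) by (auto simp: g_def algebra_simps)
  have "(2^b + 1) * nh + 2^b + 1 \<le> hamming s (g 0) + hamming s (g i)"
    if "1 \<le> i" "i \<le> 2^(a-b)" for i
    using hamming_triangle_through[OF length_g[of 0] length_g[OF \<open>i \<le> 2^(a-b)\<close>]]
      hamming_block_vs_unit_vector[OF that, of "2^b" nh] that by (simp add: g_def)
  then have pair: "real ((2^b + 1) * nh + 2^b + 1) \<le> real (hamming s (g 0)) + real (hamming s (g i))"
    if "1 \<le> i" "i \<le> 2^(a-b)" for i
    using that by (metis of_nat_add of_nat_le_iff)
  have weight: "(2 ^ b :: real) powr (real a / real b - 1) = 2 ^ (a - b)"
  proof -
    have "real b * (real a / real b - 1) = real (a - b)"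
      using assms(1,2) by (simp add: field_simps of_nat_diff)
    then show ?thesis
      by (simp add: powr_powr flip: powr_realpow)
  qed
  have "(\<Sum>i\<in>{0..2^(a-b)}. real (hamming s (g i)) powr (real a / real b))
      \<ge> (2^b + 1) * real (2^(a-b)) * (real nh + 1) powr (real a / real b)"
    using assms(1,2) pair weight
    by (intro sum_powr_ge_of_pair_bounds) (auto simp: algebra_simps)
  moreover have "(2^b + 1) * real (2^(a-b)) = 2^a + 2^(a-b)"
    using assms(2) by (simp add: algebra_simps flip: power_add)
  ultimately show ?thesis by (simp add: g_def)
qed

end
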